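(* Let $U$ be a countably infinite universe, $\mathcal{C}=(L_1,L_2,\ldots)$ a countably infinite collection of languages over $U$, and let $m^\star(L_i)$ be computed by the Procedure in the context. Any algorithm $\mathcal{G}$ that satisfies $t_{\mathcal{G}}(L_i)<m^\star(L_i)+1$ for some $i$ must satisfy $t_{\mathcal{G}}(L_j)>m^\star(L_j)+1$ for some $j<i$.
   Context: A language is an infinite subset of $U$; a collection is a sequence of languages (repetitions allowed, entries distinguished by index). An enumeration of $L$ is a sequence $x_1,x_2,\ldots$ with every $x_t\in L$ and every $x\in L$ equal to some $x_t$. A generating algorithm at each time $t\ge1$ receives $x_1,\ldots,x_t$ and outputs $z_t\in U$; $S_t$ is the set of distinct strings among $x_1,\ldots,x_t$. The generation time $t_{\mathcal{G}}(L_i)$ of an algorithm $\mathcal{G}$ for $L_i$ is the least number $s$ such that for every enumeration of $L_i$, $z_t\in L_i\setminus S_t$ for all $t$ with $|S_t|\ge s$ ($\infty$ if none). Procedure. Set $\mathcal{C}'_0=()$. For $i=1,2,3,\ldots$: append the entry $L_i$ at the end of $\mathcal{C}'_{i-1}$ to get $\mathcal{C}'_i=(L'_1,\ldots,L'_i)$, and set $j=i$. Repeat: (1) among all subcollections $\mathcal{D}$ of the entries $(L'_1,\ldots,L'_j)$ that include the entry $L'_j$ and satisfy $|\bigcap_{L\in\mathcal{D}}L|<\infty$, let $\mathcal{C}_{\mathrm{chk}}$ be one maximizing $|\bigcap_{L\in\mathcal{D}}L|$ and $m_{\mathrm{chk}}$ this maximum; if no such $\mathcal{D}$ exists, set $\mathcal{C}_{\mathrm{chk}}=()$,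 $m_{\mathrm{chk}}=0$. (2) If $j\le1$ or $m_{\mathrm{chk}}>m^\star(L'_{j-1})$, stop the loop. (3) Otherwise swap positions $j-1$ and $j$, set $j\leftarrow j-1$ and return to (1). When the loop stops, set $\mathcal{C}(L_i)=\mathcal{C}_{\mathrm{chk}}$ and $m^\star(L_i)=m_{\mathrm{chk}}$. *)

theory Defs
  imports Main "HOL-Library.Countable_Set" "HOL-Library.Extended_Nat"
begin

(* Enumerations are indexed from 1: x 1, x 2, ...  (x 0 is ignored). *)
definition is_enumeration :: "'u set \<Rightarrow> (nat \<Rightarrow> 'u) \<Rightarrow> bool" where
  "is_enumeration A x \<longleftrightarrow> (\<forall>t\<ge>1. x t \<in> A) \<and> (\<forall>y\<in>A. \<exists>t\<ge>1. x t = y)"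

definition prefix :: "(nat \<Rightarrow> 'u) \<Rightarrow> nat \<Rightarrow> 'u list" where
  "prefix x t = map x [1..<t+1]"

definition seen :: "(nat \<Rightarrow> 'u) \<Rightarrow> nat \<Rightarrow> 'u set" where
  "seen x t = x ` {1..t}"

definition gen_ok :: "('u list \<Rightarrow> 'u) \<Rightarrow> 'u set \<Rightarrow> nat \<Rightarrow> bool" where
  "gen_ok G A s \<longleftrightarrow> (\<forall>x. is_enumeration A x \<longrightarrow>
      (\<forall>t\<ge>1. card (seen x t) \<ge> s \<longrightarrow> G (prefix x t) \<in> A - seen x t))"

(* generation time; s ranges over positive integers (|S_t| >= 1 always) *)
definition gen_time :: "('u list \<Rightarrow> 'u) \<Rightarrow> 'u set \<Rightarrow> enat" where
  "gen_time G A = (if \<exists>s\<ge>1. gen_ok G A s then enat (LEAST s. s \<ge> 1 \<and> gen_ok G A s) else \<infinity>)"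

(* m_chk for the current order ord (list of original indices) at 0-based position j *)
definition mchk :: "(nat \<Rightarrow> 'u set) \<Rightarrow> nat list \<Rightarrow> nat \<Rightarrow> nat" where
  "mchk L ord j = Max (insert 0 {card (\<Inter>p\<in>D. L (ord ! p)) | D.
       D \<subseteq> {..j} \<and> j \<in> D \<and> finite (\<Inter>p\<in>D. L (ord ! p))})"

definition swap_adj :: "nat list \<Rightarrow> nat \<Rightarrow> nat list" where
  "swap_adj ord j = ord[j := ord ! Suc j, Suc j := ord ! j]"

(* The inner loop; ms gives m^* of previously inserted (original) indices. Returns new order and m_chk. *)
fun insert_loop :: "(nat \<Rightarrow> 'u set) \<Rightarrow> (nat \<Rightarrow> nat) \<Rightarrow> nat list \<Rightarrow> nat \<Rightarrow> nat list \<times> nat" where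
  "insert_loop L ms ord 0 = (ord, mchk L ord 0)"
| "insert_loop L ms ord (Suc j) =
     (let m = mchk L ord (Suc j) in
      if m > ms (ord ! j) then (ord, m) else insert_loop L ms (swap_adj ord j) j)"

(* After processing L_1..L_n: order C'_n (as original indices) and m^* values *)
fun procedure :: "(nat \<Rightarrow> 'u set) \<Rightarrow> nat \<Rightarrow> nat list \<times> (nat \<Rightarrow> nat)" where
  "procedure L 0 = ([], \<lambda>_. 0)"
| "procedure L (Suc n) =
     (let (ord, ms) = procedure L n;
          (ord', m) = insert_loop L ms (ord @ [Suc n]) n
      in (ord', ms(Suc n := m)))"

definition mstar :: "(nat \<Rightarrow> 'u set) \<Rightarrow> nat \<Rightarrow> nat" where
  "mstar L i = snd (procedure L i) i"

end

theory Submission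
  imports Defs
begin

text \<open>
  After its insertion, \<open>L\<^sub>i\<close> stands at some position \<open>J\<close> of the order and \<open>m\<^sup>\<star>(L\<^sub>i) = m\<close> is the
  size of a finite intersection \<open>I\<close> of \<open>L\<^sub>i\<close> with languages placed before it. Those have
  \<open>m\<^sup>\<star> < m\<close>: the loop stopped because the immediate predecessor has \<open>m\<^sup>\<star> < m\<close>, and the order
  is kept sorted by \<open>m\<^sup>\<star>\<close> (the swaps never increase \<open>m\<^sub>c\<^sub>h\<^sub>k\<close>).
  Present the elements of \<open>I\<close> first. If \<open>\<G>\<close> generates \<open>L\<^sub>i\<close> from size \<open>m\<close> on, its next
  output lies in \<open>L\<^sub>i \<setminus> I\<close>, hence outside some earlier \<open>L\<^sub>k \<supseteq> I\<close>; an enumeration of \<open>L\<^sub>k\<close>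
  with the same prefix then shows \<open>t\<^sub>\<G>(L\<^sub>k) > m \<ge> m\<^sup>\<star>(L\<^sub>k) + 1\<close>.
\<close>

lemma set_prefix: "set (prefix x t) = seen x t"
  unfolding prefix_def seen_def by auto

lemma enumeration_with_prefix:
  assumes "countable A" "set xs \<subseteq> A" "A \<noteq> {}"
  obtains x where "is_enumeration A x" "prefix x (length xs) = xs"
proof
  define x where
    "x t = (if t \<le> length xs then xs ! (t - 1) else from_nat_into A (t - length xs - 1))" for t
  show "prefix x (length xs) = xs"
    unfolding prefix_def by (rule nth_equalityI) (auto simp: x_def nth_upt simp del: upt_Suc)
  show "is_enumeration A x"
    unfolding is_enumeration_def
  proof (intro conjI allI impI ballI)
    fix t :: nat
    assume "t \<ge> 1"
    then have "t \<le> length xs \<Longrightarrow> xs ! (t - 1) \<in> set xs" by simp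
    then show "x t \<in> A"
      using assms(2,3) by (auto simp: x_def from_nat_into)
  next
    fix y
    assume "y \<in> A"
    then have "x (to_nat_on A y + length xs + 1) = y"
      using assms(1) by (simp add: x_def)
    then show "\<exists>t\<ge>1. x t = y" by (metis le_add2)
  qed
qed

lemma gen_time_le_enatD:
  assumes "gen_time G A \<le> enat m"
  obtains s where "1 \<le> s" "s \<le> m" "gen_ok G A s"
proof -
  have ex: "\<exists>s\<ge>1. gen_ok G A s"
    using assms by (auto simp: gen_time_def split: if_splits)
  let ?s = "LEAST s. 1 \<le> s \<and> gen_ok G A s"
  have "1 \<le> ?s \<and> gen_ok G A ?s"
    using LeastI_ex[of "\<lambda>s. 1 \<le> s \<and> gen_ok G A s"] ex by blast
  moreover have "?s \<le> m"
    using assms ex by (simp add: gen_time_def)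
  ultimately show ?thesis using that by blast
qed

lemma gen_time_le_card_imp_new:
  assumes "countable A" "set xs \<subseteq> A" "gen_time G A \<le> enat (card (set xs))"
  shows "G xs \<in> A - set xs"
proof -
  obtain s where s: "1 \<le> s" "s \<le> card (set xs)" "gen_ok G A s"
    using assms(3) by (rule gen_time_le_enatD)
  then have "xs \<noteq> []" by auto
  with assms(2) have "A \<noteq> {}" by auto
  then obtain x where x: "is_enumeration A x" "prefix x (length xs) = xs"
    by (rule enumeration_with_prefix[OF assms(1,2)])
  have "seen x (length xs) = set xs"
    using x(2) set_prefix by metis
  moreover have "length xs \<ge> 1"
    using \<open>xs \<noteq> []\<close> by (simp add: Suc_le_eq)
  ultimately show ?thesis
    using s(2,3) x unfolding gen_ok_def by metis
qed

lemma gen_time_gt_card_Inter: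
  fixes A :: "'k \<Rightarrow> 'u set"
  assumes "i \<in> K" "finite (\<Inter>k\<in>K. A k)" "\<forall>k\<in>K. countable (A k)"
    and "gen_time G (A i) \<le> enat (card (\<Inter>k\<in>K. A k))"
  shows "\<exists>k\<in>K - {i}. enat (card (\<Inter>k\<in>K. A k)) < gen_time G (A k)"
proof -
  obtain xs where xs: "set xs = (\<Inter>k\<in>K. A k)"
    using finite_list[OF assms(2)] by blast
  have "G xs \<in> A i - set xs"
    using assms xs by (intro gen_time_le_card_imp_new) auto
  then obtain k where k: "k \<in> K" "G xs \<notin> A k"
    using xs by auto
  with \<open>G xs \<in> A i - set xs\<close> have "k \<noteq> i" by auto
  have "\<not> gen_time G (A k) \<le> enat (card (set xs))"
    using gen_time_le_card_imp_new[of "A k" xs G] assms(3) k xs by auto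
  then show ?thesis
    using k \<open>k \<noteq> i\<close> xs by (auto simp: not_le)
qed

lemma finite_mchk_candidates:
  "finite {card (\<Inter>p\<in>D. L (ord ! p)) | D. D \<subseteq> {..j} \<and> j \<in> D \<and> finite (\<Inter>p\<in>D. L (ord ! p))}"
proof (rule finite_subset)
  show "finite ((\<lambda>D. card (\<Inter>p\<in>D. L (ord ! p))) ` Pow {..j})" by simp
qed blast

lemma card_Inter_le_mchk:
  assumes "D \<subseteq> {..j}" "j \<in> D" "finite (\<Inter>p\<in>D. L (ord ! p))"
  shows "card (\<Inter>p\<in>D. L (ord ! p)) \<le> mchk L ord j"
  unfolding mchk_def using assms finite_mchk_candidates by (intro Max_ge) blast+

lemma mchk_witness:
  assumes "0 < mchk L ord j"
  obtains D where "D \<subseteq> {..j}" "j \<in> D" "finite (\<Inter>p\<in>D. L (ord ! p))"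
    "card (\<Inter>p\<in>D. L (ord ! p)) = mchk L ord j"
proof -
  have "mchk L ord j \<in> insert 0
      {card (\<Inter>p\<in>D. L (ord ! p)) | D. D \<subseteq> {..j} \<and> j \<in> D \<and> finite (\<Inter>p\<in>D. L (ord ! p))}"
    unfolding mchk_def by (intro Max_in) (simp_all add: finite_mchk_candidates)
  then show ?thesis
    using assms that by auto
qed

lemma mchk_swap_adj_le:
  assumes "Suc j < length ord"
  shows "mchk L (swap_adj ord j) j \<le> mchk L ord (Suc j)"
proof (cases "mchk L (swap_adj ord j) j = 0")
  case False
  then obtain D where D: "D \<subseteq> {..j}" "j \<in> D" "finite (\<Inter>p\<in>D. L (swap_adj ord j ! p))"
      "card (\<Inter>p\<in>D. L (swap_adj ord j ! p)) = mchk L (swap_adj ord j) j"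
    by (metis mchk_witness neq0_conv)
  define f where "f p = (if p = j then Suc j else p)" for p
  have "swap_adj ord j ! p = ord ! f p" if "p \<le> j" for p
    using that assms unfolding swap_adj_def f_def by (auto simp: nth_list_update)
  then have "(\<Inter>p\<in>D. L (swap_adj ord j ! p)) = (\<Inter>p\<in>D. L (ord ! f p))"
    using D(1) by (intro INF_cong) auto
  also have "\<dots> = (\<Inter>p\<in>f ` D. L (ord ! p))"
    by simp
  finally have "(\<Inter>p\<in>D. L (swap_adj ord j ! p)) = (\<Inter>p\<in>f ` D. L (ord ! p))" .
  moreover have "f ` D \<subseteq> {..Suc j}" "Suc j \<in> f ` D"
    using D(1,2) unfolding f_def by force+
  ultimately show ?thesis
    using D card_Inter_le_mchk[of "f ` D" "Suc j" L ord] by simp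
qed simp

lemma insert_loop_result:
  assumes "sorted_wrt (\<lambda>x y. ms x \<le> ms y) (a @ b)"
    and "\<forall>x\<in>set b. mchk L (a @ new # b) (length a) \<le> ms x"
  shows "\<exists>a' b'. a' @ b' = a @ b
    \<and> insert_loop L ms (a @ new # b) (length a) = (a' @ new # b', mchk L (a' @ new # b') (length a'))
    \<and> (\<forall>x\<in>set a'. ms x < mchk L (a' @ new # b') (length a'))
    \<and> (\<forall>x\<in>set b'. mchk L (a' @ new # b') (length a') \<le> ms x)"
  using assms
proof (induction a arbitrary: b rule: rev_induct)
  case Nil
  then show ?case by (intro exI[of _ "[]"] exI[of _ b]) simp
next
  case (snoc y a)
  let ?ord = "a @ y # new # b"
  let ?m = "mchk L ?ord (Suc (length a))"
  have loop: "insert_loop L ms ?ord (Suc (length a)) =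
      (if ms y < ?m then (?ord, ?m) else insert_loop L ms (a @ new # y # b) (length a))"
    by (simp add: Let_def nth_append swap_adj_def list_update_append)
  show ?case
  proof (cases "ms y < ?m")
    case True
    have "\<forall>x\<in>set (a @ [y]). ms x < ?m"
      using True snoc.prems(1) by (auto simp: sorted_wrt_append)
    then show ?thesis
      using True loop snoc.prems(2) by (intro exI[of _ "a @ [y]"] exI[of _ b]) simp
  next
    case False
    have "mchk L (a @ new # y # b) (length a) \<le> ?m"
      using mchk_swap_adj_le[of "length a" ?ord L]
      by (simp add: nth_append swap_adj_def list_update_append)
    then have "\<forall>x\<in>set (y # b). mchk L (a @ new # y # b) (length a) \<le> ms x"
      using False snoc.prems(2) by auto
    then show ?thesis
      using snoc.IH[of "y # b"] snoc.prems(1) False loop by simp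
  qed
qed

lemma procedure_Suc:
  "procedure L (Suc n) = (let r = insert_loop L (snd (procedure L n)) (fst (procedure L n) @ [Suc n]) n
     in (fst r, (snd (procedure L n))(Suc n := snd r)))"
  by (simp add: case_prod_beta Let_def)

declare procedure.simps(2) [simp del]

lemma snd_procedure_eq_mstar:
  assumes "1 \<le> k" "k \<le> n"
  shows "snd (procedure L n) k = mstar L k"
  using assms
proof (induction n)
  case (Suc n)
  then show ?case
    by (cases "k = Suc n") (simp_all add: mstar_def procedure_Suc Let_def)
qed simp

lemma procedure_insertion_step:
  assumes "length (fst (procedure L n)) = n" "set (fst (procedure L n)) = {1..n}"
    and "sorted_wrt (\<lambda>x y. mstar L x \<le> mstar L y) (fst (procedure L n))"
  obtains a b where "a @ b = fst (procedure L n)" "fst (procedure L (Suc n)) = a @ Suc n # b"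
    "mstar L (Suc n) = mchk L (a @ Suc n # b) (length a)"
    "\<forall>x\<in>set a. mstar L x < mstar L (Suc n)" "\<forall>x\<in>set b. mstar L (Suc n) \<le> mstar L x"
proof -
  define ord where "ord = fst (procedure L n)"
  define ms where "ms = snd (procedure L n)"
  have ms: "ms x = mstar L x" if "x \<in> set ord" for x
    using that assms(2) snd_procedure_eq_mstar unfolding ms_def ord_def by auto
  have "sorted_wrt (\<lambda>x y. ms x \<le> ms y) ord"
    using assms(3) unfolding ord_def by (rule sorted_wrt_mono_rel[rotated]) (simp add: ms ord_def)
  then obtain a b where ab: "a @ b = ord"
      "insert_loop L ms (ord @ [Suc n]) n = (a @ Suc n # b, mchk L (a @ Suc n # b) (length a))"
      "\<forall>x\<in>set a. ms x < mchk L (a @ Suc n # b) (length a)"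
      "\<forall>x\<in>set b. mchk L (a @ Suc n # b) (length a) \<le> ms x"
    using insert_loop_result[of ms ord "[]" L "Suc n"] assms(1) unfolding ord_def by auto
  have "fst (procedure L (Suc n)) = a @ Suc n # b"
    "mstar L (Suc n) = mchk L (a @ Suc n # b) (length a)"
    using ab(2) by (simp_all add: mstar_def procedure_Suc ord_def ms_def)
  moreover have "\<forall>x\<in>set a. mstar L x < mchk L (a @ Suc n # b) (length a)"
    "\<forall>x\<in>set b. mchk L (a @ Suc n # b) (length a) \<le> mstar L x"
    using ab ms by auto
  ultimately show ?thesis
    using ab(1) that unfolding ord_def by auto
qed

lemma procedure_invariant:
  "length (fst (procedure L n)) = n \<and> set (fst (procedure L n)) = {1..n}
   \<and> sorted_wrt (\<lambda>x y. mstar L x \<le> mstar L y) (fst (procedure L n))"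
proof (induction n)
  case (Suc n)
  obtain a b where ab: "a @ b = fst (procedure L n)" "fst (procedure L (Suc n)) = a @ Suc n # b"
    "\<forall>x\<in>set a. mstar L x < mstar L (Suc n)" "\<forall>x\<in>set b. mstar L (Suc n) \<le> mstar L x"
    by (rule procedure_insertion_step[of L n]) (use Suc.IH in auto)
  have "length (a @ b) = n" "set (a @ b) = {1..n}"
    and "sorted_wrt (\<lambda>x y. mstar L x \<le> mstar L y) (a @ b)"
    using Suc.IH unfolding ab(1) by simp_all
  moreover have "sorted_wrt (\<lambda>x y. mstar L x \<le> mstar L y) (a @ Suc n # b)"
    using calculation(3) ab(3,4) by (auto simp: sorted_wrt_append intro: less_imp_le)
  ultimately show ?case
    unfolding ab(2) by auto
qed simp

lemma mstar_eq_mchk_at_insertion: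
  assumes "1 \<le> i"
  obtains ord J where "ord ! J = i" "mstar L i = mchk L ord J"
    "\<forall>p<J. ord ! p \<in> {1..<i} \<and> mstar L (ord ! p) < mstar L i"
proof -
  obtain n where i: "i = Suc n"
    using assms by (cases i) auto
  obtain a b where ab: "a @ b = fst (procedure L n)"
    "mstar L i = mchk L (a @ i # b) (length a)" "\<forall>x\<in>set a. mstar L x < mstar L i"
    using procedure_insertion_step[of L n] procedure_invariant[of L n] unfolding i by metis
  have "set (a @ b) = {1..n}"
    using procedure_invariant[of L n] unfolding ab(1) by simp
  then have "a ! p \<in> {1..<i}" if "p < length a" for p
    using that i nth_mem[of p a] by (auto simp flip: atLeastLessThanSuc_atLeastAtMost)
  then show ?thesis
    using ab(2,3) by (intro that[of "a @ i # b" "length a"]) (auto simp: nth_append)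
qed

theorem mainTheorem11:
  fixes L :: "nat \<Rightarrow> 'u set" and G :: "'u list \<Rightarrow> 'u" and i :: nat
  assumes "countable (UNIV :: 'u set)" and "infinite (UNIV :: 'u set)"
    and "\<forall>k\<ge>1. infinite (L k)"
    and "i \<ge> 1"
    and "gen_time G (L i) < enat (mstar L i + 1)"
  shows "\<exists>j. 1 \<le> j \<and> j < i \<and> gen_time G (L j) > enat (mstar L j + 1)"
proof -
  obtain ord J where pos: "ord ! J = i" "mstar L i = mchk L ord J"
    "\<forall>p<J. ord ! p \<in> {1..<i} \<and> mstar L (ord ! p) < mstar L i"
    by (rule mstar_eq_mchk_at_insertion[OF assms(4)])
  have le: "gen_time G (L i) \<le> enat (mstar L i)"
    using assms(5) by (cases "gen_time G (L i)") auto
  then obtain s where "1 \<le> s" "s \<le> mstar L i"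
    by (rule gen_time_le_enatD)
  then have "0 < mchk L ord J"
    using pos(2) by simp
  then obtain D where D: "D \<subseteq> {..J}" "J \<in> D" "finite (\<Inter>p\<in>D. L (ord ! p))"
    "card (\<Inter>p\<in>D. L (ord ! p)) = mstar L i"
    using pos(2) by (metis mchk_witness)
  then obtain p where p: "p \<in> D - {J}" "enat (mstar L i) < gen_time G (L (ord ! p))"
    using gen_time_gt_card_Inter[of J D "\<lambda>p. L (ord ! p)" G] le pos(1)
      countable_subset[OF subset_UNIV assms(1)] by auto
  then have "ord ! p \<in> {1..<i}" "mstar L (ord ! p) < mstar L i"
    using pos(3) D(1) by auto
  moreover from this(2) have "enat (mstar L (ord ! p) + 1) \<le> enat (mstar L i)"
    by simp
  then have "enat (mstar L (ord ! p) + 1) < gen_time G (L (ord ! p))"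
    using p(2) by (rule order.strict_trans1)
  ultimately show ?thesis
    by (intro exI[of _ "ord ! p"]) auto
qed

end
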